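(* Let $S$ be a finite set of points in $\mathbb{R}^D$, let $t\geqslant 1$ be a real number, let $G$ be a $t$-spanner for $S$, and let $T$ be a minimum spanning tree of $G$. Let $p$ and $q$ be two points of $S$. Then every edge on the path in $T$ between $p$ and $q$ has length at most $t\cdot d(p,q)$.
   Context: $d(u,v)$ denotes Euclidean distance. For a graph $G$ with vertex set $S\subset\mathbb{R}^D$, each edge $(u,v)$ has weight (length) $d(u,v)$ and $d_G(u,v)$ is the length of a shortest path in $G$ between $u$ and $v$. $G$ is a $t$-spanner for $S$ if its vertex set is $S$ and $d_G(u,v)\leqslant t\cdot d(u,v)$ for all $u,v\in S$. A minimum spanning tree of $G$ is a spanning tree of $G$ (using only edges of $G$) of minimum total edge weight. *)

theory Defs
  imports "HOL-Analysis.Analysis"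
begin

definition ugraph :: "'a set \<Rightarrow> 'a set set \<Rightarrow> bool" where
  "ugraph V E \<longleftrightarrow> (\<forall>e\<in>E. \<exists>u v. e = {u, v} \<and> u \<noteq> v \<and> u \<in> V \<and> v \<in> V)"

text \<open>Length (weight) of an edge: the Euclidean distance of its endpoints.\<close>
definition edge_len :: "'a::euclidean_space set \<Rightarrow> real" where
  "edge_len e = diameter e"

definition weight :: "'a::euclidean_space set set \<Rightarrow> real" where
  "weight E = (\<Sum>e\<in>E. edge_len e)"

definition is_walk :: "'a set set \<Rightarrow> 'a list \<Rightarrow> bool" where
  "is_walk E xs \<longleftrightarrow> xs \<noteq> [] \<and> (\<forall>i. Suc i < length xs \<longrightarrow> {xs ! i, xs ! Suc i} \<in> E)"

definition walk_length :: "'a::euclidean_space list \<Rightarrow> real" where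
  "walk_length xs = (\<Sum>i<length xs - 1. dist (xs ! i) (xs ! Suc i))"

definition is_path :: "'a set set \<Rightarrow> 'a \<Rightarrow> 'a \<Rightarrow> 'a list \<Rightarrow> bool" where
  "is_path E p q xs \<longleftrightarrow> is_walk E xs \<and> distinct xs \<and> hd xs = p \<and> last xs = q"

definition connected_graph :: "'a set \<Rightarrow> 'a set set \<Rightarrow> bool" where
  "connected_graph V E \<longleftrightarrow> (\<forall>u\<in>V. \<forall>v\<in>V. \<exists>xs. is_path E u v xs)"

definition acyclic_graph :: "'a set set \<Rightarrow> bool" where
  "acyclic_graph E \<longleftrightarrow>
     \<not> (\<exists>xs. 3 \<le> length xs \<and> distinct xs \<and> is_walk E xs \<and> {last xs, hd xs} \<in> E)"

definition spanning_tree :: "'a set \<Rightarrow> 'a set set \<Rightarrow> 'a set set \<Rightarrow> bool" where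
  "spanning_tree V E T \<longleftrightarrow> T \<subseteq> E \<and> connected_graph V T \<and> acyclic_graph T"

definition minimum_spanning_tree ::
  "'a::euclidean_space set \<Rightarrow> 'a set set \<Rightarrow> 'a set set \<Rightarrow> bool" where
  "minimum_spanning_tree V E T \<longleftrightarrow> spanning_tree V E T \<and>
     (\<forall>T'. spanning_tree V E T' \<longrightarrow> weight T \<le> weight T')"

definition graph_dist :: "'a::euclidean_space set set \<Rightarrow> 'a \<Rightarrow> 'a \<Rightarrow> real" where
  "graph_dist E u v = Inf {walk_length xs | xs. is_walk E xs \<and> hd xs = u \<and> last xs = v}"

definition t_spanner :: "'a::euclidean_space set \<Rightarrow> 'a set set \<Rightarrow> real \<Rightarrow> bool" where
  "t_spanner S E t \<longleftrightarrow> ugraph S E \<and> connected_graph S E \<and>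
     (\<forall>u\<in>S. \<forall>v\<in>S. graph_dist E u v \<le> t * dist u v)"

end

theory Submission
  imports Defs
begin

(* Let e = {a, b} be an edge of the tree path from p to q. Deleting e splits T into the part
   reachable from a, which contains p, and the part reachable from b, which contains q. Every
   walk of G from p to q therefore leaves the part of a along some edge f of G, and f lands in
   the part of b. Exchanging e for f keeps the graph connected, so it still contains a spanning
   tree, and minimality of T gives |e| \<le> |f|. Hence |e| is at most the length of every such
   walk, i.e. |e| \<le> d_G(p, q) \<le> t d(p, q). *)

definition adjacent :: "'a set set \<Rightarrow> 'a \<Rightarrow> 'a \<Rightarrow> bool" where
  "adjacent F x y \<longleftrightarrow> {x, y} \<in> F"

abbreviation reachable :: "'a set set \<Rightarrow> 'a \<Rightarrow> 'a \<Rightarrow> bool" where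
  "reachable F \<equiv> (adjacent F)\<^sup>*\<^sup>*"

lemma symp_adjacent: "symp (adjacent F)"
  by (rule sympI) (simp add: adjacent_def insert_commute)

lemma reachable_sym: "reachable F x y \<Longrightarrow> reachable F y x"
  by (rule sympD[OF symp_rtranclp[OF symp_adjacent]])

lemma reachable_mono: "F \<subseteq> G \<Longrightarrow> reachable F x y \<Longrightarrow> reachable G x y"
  by (metis (no_types, lifting) adjacent_def mono_rtranclp subsetD)

lemma reachable_insert_edge:
  assumes "reachable G a b" "F \<subseteq> G" "reachable (insert {a, b} F) x y"
  shows "reachable G x y"
  using assms(3)
proof (induction rule: rtranclp_induct)
  case (step y z)
  have "reachable G y z"
  proof (cases "{y, z} = {a, b}")
    case True
    then show ?thesis
      using assms(1) reachable_sym[OF assms(1)] by (auto simp: doubleton_eq_iff)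
  next
    case False
    with step.hyps(2) assms(2) have "adjacent G y z" by (auto simp: adjacent_def)
    then show ?thesis by (rule r_into_rtranclp)
  qed
  with step.IH show ?case by (rule rtranclp_trans)
qed simp

lemma reachable_along_walk:
  assumes "j \<le> k" "\<forall>l. j \<le> l \<and> l < k \<longrightarrow> {ws ! l, ws ! Suc l} \<in> F"
  shows "reachable F (ws ! j) (ws ! k)"
  using assms
proof (induction k rule: dec_induct)
  case (step k)
  then have "adjacent F (ws ! k) (ws ! Suc k)" by (simp add: adjacent_def)
  with step show ?case by (simp add: rtranclp.rtrancl_into_rtrancl)
qed simp

lemma walk_reachable: "is_walk F ws \<Longrightarrow> reachable F (hd ws) (last ws)"
  using reachable_along_walk[of 0 "length ws - 1" ws F]
  by (simp add: is_walk_def hd_conv_nth last_conv_nth)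

lemma path_if_reachable:
  assumes "reachable F u v"
  shows "\<exists>xs. is_path F u v xs"
  using assms
proof (induction rule: rtranclp_induct)
  case base
  show ?case by (rule exI[of _ "[u]"]) (simp add: is_path_def is_walk_def)
next
  case (step x y)
  then obtain xs where xs: "is_path F u x xs" by blast
  then have ne: "xs \<noteq> []" and w: "is_walk F xs" and d: "distinct xs"
    and h: "hd xs = u" and l: "last xs = x"
    by (auto simp: is_path_def is_walk_def)
  show ?case
  proof (cases "y \<in> set xs")
    case True
    then obtain k where k: "k < length xs" "xs ! k = y" by (meson in_set_conv_nth)
    let ?ys = "take (Suc k) xs"
    have "is_walk F ?ys" using w k unfolding is_walk_def by auto
    moreover have "hd ?ys = u" using h ne by (simp add: hd_conv_nth)
    moreover have "last ?ys = y" using k by (simp add: last_conv_nth take_Suc_conv_app_nth)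
    ultimately show ?thesis using d unfolding is_path_def by (metis distinct_take)
  next
    case False
    let ?ys = "xs @ [y]"
    have "is_walk F ?ys" unfolding is_walk_def
    proof (intro conjI allI impI)
      fix k assume k: "Suc k < length ?ys"
      show "{?ys ! k, ?ys ! Suc k} \<in> F"
      proof (cases "Suc k < length xs")
        case True
        then show ?thesis using w by (simp add: is_walk_def nth_append)
      next
        case False
        then have "k = length xs - 1" "Suc k = length xs" using k by auto
        then show ?thesis using step.hyps(2) l ne by (simp add: nth_append adjacent_def last_conv_nth)
      qed
    qed simp
    then show ?thesis using d h ne False unfolding is_path_def by auto
  qed
qed

lemma path_reachable: "is_path F u v xs \<Longrightarrow> reachable F u v"
  unfolding is_path_def using walk_reachable by metis

lemma connected_graph_iff_reachable:
  "connected_graph V F \<longleftrightarrow> (\<forall>u\<in>V. \<forall>v\<in>V. reachable F u v)"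
  unfolding connected_graph_def using path_if_reachable path_reachable by metis

lemma distinct_nth_doubleton_eq:
  assumes "distinct xs" "Suc k < length xs" "a < length xs" "b < length xs"
    and "{xs ! k, xs ! Suc k} = {xs ! a, xs ! b}"
  shows "(a = k \<and> b = Suc k) \<or> (a = Suc k \<and> b = k)"
  using assms by (auto simp: doubleton_eq_iff nth_eq_iff_index_eq)

lemma walk_minus_closing_edge:
  assumes "3 \<le> length xs" "distinct xs" "is_walk F xs"
  shows "is_walk (F - {{last xs, hd xs}}) xs"
  unfolding is_walk_def
proof (intro conjI allI impI)
  show "xs \<noteq> []" using assms(1) by auto
  fix k assume k: "Suc k < length xs"
  have "{last xs, hd xs} = {xs ! (length xs - 1), xs ! 0}"
    using \<open>xs \<noteq> []\<close> by (simp add: hd_conv_nth last_conv_nth)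
  then have "{xs ! k, xs ! Suc k} \<noteq> {last xs, hd xs}"
    using distinct_nth_doubleton_eq[OF assms(2) k, of "length xs - 1" 0] k assms(1) \<open>xs \<noteq> []\<close>
    by auto
  with assms(3) k show "{xs ! k, xs ! Suc k} \<in> F - {{last xs, hd xs}}"
    by (simp add: is_walk_def)
qed

lemma distinct_walk_minus_edge_reachable:
  assumes "is_walk F xs" "distinct xs" "Suc i < length xs"
  defines "F' \<equiv> F - {{xs ! i, xs ! Suc i}}"
  shows "reachable F' (hd xs) (xs ! i)" and "reachable F' (xs ! Suc i) (last xs)"
proof -
  have edge: "{xs ! l, xs ! Suc l} \<in> F'" if "Suc l < length xs" "l \<noteq> i" for l
    using that assms distinct_nth_doubleton_eq[OF assms(2) that(1), of i "Suc i"]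
    by (auto simp: is_walk_def)
  show "reachable F' (hd xs) (xs ! i)"
    using reachable_along_walk[of 0 i xs F'] edge assms(1,3) by (simp add: is_walk_def hd_conv_nth)
  have "reachable F' (xs ! Suc i) (xs ! (length xs - 1))"
    by (rule reachable_along_walk) (use assms(3) edge in auto)
  then show "reachable F' (xs ! Suc i) (last xs)"
    using assms(3) by (subst last_conv_nth) auto
qed

lemma walk_crossing_edge:
  assumes "ws \<noteq> []" "P (hd ws)" "\<not> P (last ws)"
  shows "\<exists>j. Suc j < length ws \<and> P (ws ! j) \<and> \<not> P (ws ! Suc j)"
proof (rule ccontr)
  assume no_crossing: "\<not> ?thesis"
  have "k < length ws \<Longrightarrow> P (ws ! k)" for k
    using assms(1,2) no_crossing by (induction k) (auto simp: hd_conv_nth)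
  then show False using assms by (simp add: last_conv_nth)
qed

lemma dist_nth_le_walk_length:
  assumes "Suc j < length ws"
  shows "dist (ws ! j) (ws ! Suc j) \<le> walk_length ws"
  unfolding walk_length_def
  by (rule member_le_sum[where f = "\<lambda>i. dist (ws ! i) (ws ! Suc i)"]) (use assms in auto)

lemma le_graph_dist:
  assumes "connected_graph V E" "p \<in> V" "q \<in> V"
    and "\<And>ws. is_walk E ws \<Longrightarrow> hd ws = p \<Longrightarrow> last ws = q \<Longrightarrow> c \<le> walk_length ws"
  shows "c \<le> graph_dist E p q"
  unfolding graph_dist_def
proof (rule cInf_greatest)
  obtain zs where "is_path E p q zs" using assms(1-3) unfolding connected_graph_def by blast
  then show "{walk_length ws |ws. is_walk E ws \<and> hd ws = p \<and> last ws = q} \<noteq> {}"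
    unfolding is_path_def by blast
qed (use assms(4) in blast)

lemma edge_len_doubleton: "edge_len {u, v} = dist u v"
proof (rule antisym)
  show "edge_len {u, v} \<le> dist u v"
    unfolding edge_len_def by (rule diameter_le) (auto simp: dist_norm norm_minus_commute)
  show "dist u v \<le> edge_len {u, v}"
    unfolding edge_len_def by (rule diameter_bounded_bound) (auto intro: finite_imp_bounded)
qed

lemma edge_len_nonneg: "finite e \<Longrightarrow> 0 \<le> edge_len e"
  unfolding edge_len_def by (rule diameter_ge_0) (rule finite_imp_bounded)

lemma ugraph_edges_subset:
  assumes "ugraph V E"
  shows "E \<subseteq> Pow V"
proof
  fix e assume "e \<in> E"
  then obtain u v where "e = {u, v}" "u \<in> V" "v \<in> V"
    using assms unfolding ugraph_def by blast
  then show "e \<in> Pow V" by simp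
qed

lemma connected_subgraph_contains_spanning_tree:
  assumes "finite F" "F \<subseteq> E" "connected_graph V F" "\<forall>e\<in>F. finite e"
  shows "\<exists>T. spanning_tree V E T \<and> weight T \<le> weight F"
  using assms
proof (induction "card F" arbitrary: F rule: less_induct)
  case less
  show ?case
  proof (cases "acyclic_graph F")
    case True
    then show ?thesis using less.prems unfolding spanning_tree_def by auto
  next
    case False
    then obtain xs where xs: "3 \<le> length xs" "distinct xs" "is_walk F xs" "{last xs, hd xs} \<in> F"
      unfolding acyclic_graph_def by auto
    define g where "g = {last xs, hd xs}"
    define F' where "F' = F - {g}"
    have "reachable F' (last xs) (hd xs)"
      unfolding F'_def g_def
      by (rule reachable_sym[OF walk_reachable[OF walk_minus_closing_edge[OF xs(1-3)]]])
    moreover have "F = insert g F'" using xs(4) unfolding F'_def g_def by blast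
    ultimately have "reachable F x y \<Longrightarrow> reachable F' x y" for x y
      using reachable_insert_edge[of F' "last xs" "hd xs" F'] unfolding g_def by auto
    then have "connected_graph V F'"
      using less.prems(3) unfolding connected_graph_iff_reachable by blast
    moreover have "card F' < card F"
      unfolding F'_def g_def using card_Diff1_less[OF less.prems(1) xs(4)] .
    moreover have "finite F'" "F' \<subseteq> E" "\<forall>e\<in>F'. finite e"
      using less.prems unfolding F'_def by auto
    ultimately obtain T where T: "spanning_tree V E T" "weight T \<le> weight F'"
      using less.hyps by blast
    have "weight F = weight F' + edge_len g"
      unfolding weight_def F'_def g_def using xs(4) less.prems(1) by (simp add: sum.remove)
    moreover have "0 \<le> edge_len g" using xs(4) less.prems(4) edge_len_nonneg unfolding g_def by blast
    ultimately show ?thesis using T by force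
  qed
qed

lemma minimum_spanning_tree_exchange:
  assumes "minimum_spanning_tree V E T" "ugraph V E" "finite V"
    and "e \<in> T" "f \<in> E" "connected_graph V (insert f (T - {e}))"
  shows "edge_len e \<le> edge_len f"
proof -
  let ?H = "insert f (T - {e})"
  have E_Pow: "E \<subseteq> Pow V" by (rule ugraph_edges_subset[OF assms(2)])
  then have finE: "finite E" using assms(3) by (simp add: finite_subset)
  have fin_edge: "finite g" if "g \<in> E" for g
    using that E_Pow assms(3) by (auto intro: finite_subset)
  have TE: "T \<subseteq> E" using assms(1) by (simp add: minimum_spanning_tree_def spanning_tree_def)
  then have HE: "?H \<subseteq> E" using assms(5) by blast
  have finT: "finite T" using finite_subset[OF TE finE] .
  obtain T' where T': "spanning_tree V E T'" "weight T' \<le> weight ?H"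
    using connected_subgraph_contains_spanning_tree[OF finite_subset[OF HE finE] HE assms(6)]
      HE fin_edge by blast
  have "weight T \<le> weight T'"
    using assms(1) T'(1) unfolding minimum_spanning_tree_def by blast
  also have "\<dots> \<le> weight ?H" by (rule T'(2))
  also have "\<dots> \<le> weight (T - {e}) + edge_len f"
  proof (cases "f \<in> T - {e}")
    case True
    then show ?thesis using edge_len_nonneg[OF fin_edge[OF assms(5)]] by (simp add: insert_absorb)
  next
    case False
    then show ?thesis using finT unfolding weight_def by simp
  qed
  finally show ?thesis
    unfolding weight_def using assms(4) finT by (simp add: sum.remove)
qed

lemma minimum_spanning_tree_cut:
  assumes "minimum_spanning_tree V E T" "ugraph V E" "finite V"
    and "{a, b} \<in> T" "{c, d} \<in> E"
    and "reachable (T - {{a, b}}) a c" "reachable (T - {{a, b}}) b d"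
  shows "edge_len {a, b} \<le> edge_len {c, d}"
proof (rule minimum_spanning_tree_exchange[OF assms(1-5)])
  let ?T' = "T - {{a, b}}" and ?H = "insert {c, d} (T - {{a, b}})"
  have "reachable ?H a c" by (rule reachable_mono[OF _ assms(6)]) blast
  moreover have "adjacent ?H c d" by (simp add: adjacent_def)
  moreover have "reachable ?H d b" by (rule reachable_mono[OF _ reachable_sym[OF assms(7)]]) blast
  ultimately have "reachable ?H a b" by (meson rtranclp.rtrancl_into_rtrancl rtranclp_trans)
  moreover have "T = insert {a, b} ?T'" using assms(4) by blast
  ultimately have "reachable T x y \<Longrightarrow> reachable ?H x y" for x y
    using reachable_insert_edge[of ?H a b ?T'] by auto
  moreover have "connected_graph V T"
    using assms(1) by (simp add: minimum_spanning_tree_def spanning_tree_def)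
  ultimately show "connected_graph V ?H" unfolding connected_graph_iff_reachable by blast
qed

lemma acyclic_graph_minus_edge_unreachable:
  assumes "acyclic_graph T" "{a, b} \<in> T" "a \<noteq> b"
  shows "\<not> reachable (T - {{a, b}}) a b"
proof
  assume "reachable (T - {{a, b}}) a b"
  then obtain ys where "is_path (T - {{a, b}}) a b ys" by (metis path_if_reachable)
  then have w: "is_walk (T - {{a, b}}) ys" and "distinct ys" and h: "hd ys = a" and l: "last ys = b"
    unfolding is_path_def by auto
  have ne: "ys \<noteq> []" using w by (simp add: is_walk_def)
  have "length ys \<noteq> 1"
  proof
    assume "length ys = 1"
    then have "hd ys = last ys" using ne by (simp add: hd_conv_nth last_conv_nth)
    with h l assms(3) show False by simp
  qed
  moreover have "length ys \<noteq> 2"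
  proof
    assume len: "length ys = 2"
    then have "{ys ! 0, ys ! 1} \<in> T - {{a, b}}" using w by (simp add: is_walk_def)
    moreover have "ys ! 0 = a" "ys ! 1 = b" using h l ne len by (simp_all add: hd_conv_nth last_conv_nth)
    ultimately show False by simp
  qed
  moreover have "length ys \<noteq> 0" using ne by simp
  ultimately have "3 \<le> length ys" by linarith
  moreover have "is_walk T ys" using w unfolding is_walk_def by blast
  moreover have "{last ys, hd ys} \<in> T" using assms(2) h l by (simp add: insert_commute)
  ultimately show False
    using assms(1) \<open>distinct ys\<close> unfolding acyclic_graph_def by blast
qed

lemma reachable_minus_edge:
  assumes "reachable F a v"
  shows "reachable (F - {{a, b}}) a v \<or> reachable (F - {{a, b}}) b v"
  using assms
proof (induction rule: rtranclp_induct)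
  case (step y z)
  show ?case
  proof (cases "{y, z} = {a, b}")
    case True
    then show ?thesis by (auto simp: doubleton_eq_iff)
  next
    case False
    with step.hyps(2) have "adjacent (F - {{a, b}}) y z" by (simp add: adjacent_def)
    with step.IH show ?thesis by (meson rtranclp.rtrancl_into_rtrancl)
  qed
qed simp

lemma minimum_spanning_tree_path_edge_le_walk_length:
  assumes mst: "minimum_spanning_tree S E T" and "ugraph S E" "finite S"
    and path: "is_path T p q xs" "Suc i < length xs"
    and walk: "is_walk E ws" "hd ws = p" "last ws = q"
  shows "edge_len {xs ! i, xs ! Suc i} \<le> walk_length ws"
proof -
  define a where "a = xs ! i"
  define b where "b = xs ! Suc i"
  let ?T' = "T - {{a, b}}"
  have T: "T \<subseteq> E" "connected_graph S T" "acyclic_graph T"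
    using mst by (auto simp: minimum_spanning_tree_def spanning_tree_def)
  have ab: "{a, b} \<in> T" "a \<noteq> b"
    using path unfolding a_def b_def is_path_def is_walk_def by (auto simp: nth_eq_iff_index_eq)
  have pa: "reachable ?T' p a" and bq: "reachable ?T' b q"
    using distinct_walk_minus_edge_reachable[of T xs i] path
    unfolding a_def b_def is_path_def by auto
  have "reachable ?T' a (hd ws)" using walk(2) reachable_sym[OF pa] by simp
  moreover have "\<not> reachable ?T' a (last ws)"
  proof
    assume "reachable ?T' a (last ws)"
    with walk(3) have "reachable ?T' a q" by simp
    then have "reachable ?T' a b" using reachable_sym[OF bq] by (rule rtranclp_trans)
    with acyclic_graph_minus_edge_unreachable[OF T(3) ab] show False by blast
  qed
  ultimately obtain j where
    j: "Suc j < length ws" "reachable ?T' a (ws ! j)" "\<not> reachable ?T' a (ws ! Suc j)"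
    using walk_crossing_edge[of ws "reachable ?T' a"] walk(1) by (auto simp: is_walk_def)
  have cd: "{ws ! j, ws ! Suc j} \<in> E" using walk(1) j(1) by (simp add: is_walk_def)
  then have "a \<in> S" "ws ! Suc j \<in> S"
    using ugraph_edges_subset[OF assms(2)] T(1) ab(1) by auto
  then have bd: "reachable ?T' b (ws ! Suc j)"
    using reachable_minus_edge[of T a] T(2) j(3) unfolding connected_graph_iff_reachable by blast
  have "edge_len {a, b} \<le> edge_len {ws ! j, ws ! Suc j}"
    by (rule minimum_spanning_tree_cut[OF mst assms(2,3) ab(1) cd j(2) bd])
  also have "\<dots> \<le> walk_length ws"
    using dist_nth_le_walk_length[OF j(1)] by (simp add: edge_len_doubleton)
  finally show ?thesis unfolding a_def b_def .
qed

theorem lemma4: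
  fixes S :: "'a::euclidean_space set" and E T :: "'a set set" and t :: real
    and p q :: 'a and xs :: "'a list" and i :: nat
  assumes "finite S" and "t \<ge> 1"
    and "t_spanner S E t"
    and "minimum_spanning_tree S E T"
    and "p \<in> S" and "q \<in> S"
    and "is_path T p q xs"
    and "Suc i < length xs"
  shows "edge_len {xs ! i, xs ! Suc i} \<le> t * dist p q"
proof -
  have E: "ugraph S E" "connected_graph S E" "graph_dist E p q \<le> t * dist p q"
    using assms(3,5,6) unfolding t_spanner_def by blast+
  have "edge_len {xs ! i, xs ! Suc i} \<le> graph_dist E p q"
    using le_graph_dist[OF E(2) assms(5,6)]
      minimum_spanning_tree_path_edge_le_walk_length[OF assms(4) E(1) assms(1,7,8)] by blast
  with E(3) show ?thesis by linarith
qed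

end
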